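(* Assume all features are binary, $x_{i,k}\in\{0,1\}$. Let $0<\lambda\le\lambda_0$. Let $\boldsymbol\alpha_0^\star$ be the optimal solution of $\max_{\boldsymbol\alpha\ge\mathbf0}D_{\lambda_0}(\boldsymbol\alpha)$, and let $\boldsymbol\alpha_0\in\mathbb R^{2nK}_{\ge0}$ and $\epsilon\ge0$ satisfy $\|\boldsymbol\alpha_0-\boldsymbol\alpha_0^\star\|_2\le\epsilon$. Let $\mathbf m^\star$ be the optimal solution of $\min_{\mathbf m\ge\mathbf0}P_\lambda(\mathbf m)$. For $k\in[p]$ let $$a=\sum_{i\in[n]}\max\Big\{\sum_{l\in\mathcal D_i}(\alpha_0)_{il}x_{l,k},\;x_{i,k}\Big[\sum_{l\in\mathcal D_i}(\alpha_0)_{il}-\sum_{j\in\mathcal S_i}(\alpha_0)_{ij}(1-x_{j,k})\Big]\Big\},$$ $$b=\sqrt{\sum_{i\in[n]}\Big[\sum_{l\in\mathcal D_i}\max\{x_{i,k},x_{l,k}\}+\sum_{j\in\mathcal S_i}\max\{x_{i,k},x_{j,k}\}\Big]},\qquad\lambda'_a=\frac{\lambda_0(2\epsilon b+\|\boldsymbol\alpha_0\|_2b+a)}{2\lambda_0+\|\boldsymbol\alpha_0\|_2b-a}.$$ If $\lambda'_a\le\lambda\le\lambda_0$, then $m^\star_{k'}=0$ for every descendant $k'\supseteq k$.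
   Context: Let $n,K,p\ge1$ be integers, $[n]=\{1,\dots,n\}$. For each $i\in[n]$ let $\mathbf x_i=(x_{i,1},\dots,x_{i,p})^\top\in\mathbb R^p$ and let $\mathcal D_i,\mathcal S_i\subseteq[n]$ be sets of size $K$. Put $\mathbf c_{ij}=(\mathbf x_i-\mathbf x_j)\circ(\mathbf x_i-\mathbf x_j)$ (entrywise product). Vectors in $\mathbb R^{2nK}$ are indexed by the pairs $(i,l)$, $l\in\mathcal D_i$ ("different-class pairs") and $(i,j)$, $j\in\mathcal S_i$ ("same-class pairs"); $\boldsymbol\alpha_0$ has entries $(\alpha_0)_{il},(\alpha_0)_{ij}$. $\mathbf C\in\mathbb R^{p\times2nK}$ has column $\mathbf c_{il}$ for each different-class pair and $-\mathbf c_{ij}$ for each same-class pair. Fix $L\ge U\ge0$, $\eta>0$; let $\mathbf t\in\mathbb R^{2nK}$ have entry $L$ at different-class pairs and $-U$ at same-class pairs; $\ell_s(x)=([s-x]_+)^2$ with $[z]_+=\max\{z,0\}$ (entrywise for vectors); $\mathbf1$ is the all-ones vector. For $\lambda>0$, $$P_\lambda(\mathbf m)=\sum_{i\in[n]}\Big[\sum_{l\in\mathcal D_i}\ell_L(\mathbf m^\top\mathbf c_{il})+\sum_{j\in\mathcal S_i}\ell_{-U}(-\mathbf m^\top\mathbf c_{ij})\Big]+\lambda\Big(\mathbf m^\top\mathbf1+\frac\eta2\|\mathbf m\|_2^2\Big)\ (\mathbf m\in\mathbb R^p_{\ge0}),$$ $$D_\lambda(\boldsymbol\alpha)=-\frac14\|\boldsymbol\alpha\|_2^2+\mathbf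 t^\top\boldsymbol\alpha-\frac{\lambda\eta}2\Big\|\frac1{\lambda\eta}[\mathbf C\boldsymbol\alpha-\lambda\mathbf1]_+\Big\|_2^2\ (\boldsymbol\alpha\in\mathbb R^{2nK}_{\ge0}).$$ The feature indices $[p]$ are nodes of a rooted graph-mining tree: $x_{i,k}=g(\#(H_k\sqsubseteq G_i))$ with $g(x)=1_{x>0}$, where $H_k$ is the subgraph at node $k$, $G_i$ the $i$-th input graph, $\#(H\sqsubseteq G)$ the number of non-overlapping occurrences of $H$ in $G$, and each node's subgraph is contained in its children's subgraphs. Write $k'\supseteq k$ if $k'$ is a descendant of $k$; then $x_{i,k'}\le x_{i,k}$ for all $i$ whenever $k'\supseteq k$. *)

theory Defs
  imports Complex_Main
begin

text \<open>Graph indices i range over {1..n}, feature indices k over {1..p}.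
  Features: x i k (the k-th entry of the vector x_i). A vector alpha in R^(2nK) is
  represented by a pair of functions (aD, aS): aD i l is the entry at the
  different-class pair (i,l), l in D i; aS i j is the entry at the same-class pair
  (i,j), j in S i. Values outside these index sets are irrelevant.
  A primal vector m in R^p is a function m with relevant entries m k, k in {1..p}.\<close>

definition sqhinge :: "real \<Rightarrow> real \<Rightarrow> real" where
  "sqhinge s z = (max (s - z) 0)^2"

definition mc :: "nat \<Rightarrow> (nat \<Rightarrow> nat \<Rightarrow> real) \<Rightarrow> (nat \<Rightarrow> real) \<Rightarrow> nat \<Rightarrow> nat \<Rightarrow> real" where
  "mc p x m i j = (\<Sum>k\<in>{1..p}. m k * ((x i k - x j k) * (x i k - x j k)))"

definition Primal ::
  "nat \<Rightarrow> nat \<Rightarrow> (nat \<Rightarrow> nat set) \<Rightarrow> (nat \<Rightarrow> nat set) \<Rightarrow> (nat \<Rightarrow> nat \<Rightarrow> real)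
   \<Rightarrow> real \<Rightarrow> real \<Rightarrow> real \<Rightarrow> real \<Rightarrow> (nat \<Rightarrow> real) \<Rightarrow> real" where
  "Primal n p D S x L U \<eta> lam m =
     (\<Sum>i\<in>{1..n}. (\<Sum>l\<in>D i. sqhinge L (mc p x m i l))
                  + (\<Sum>j\<in>S i. sqhinge (- U) (- mc p x m i j)))
     + lam * ((\<Sum>k\<in>{1..p}. m k) + \<eta> / 2 * (\<Sum>k\<in>{1..p}. (m k)^2))"

definition Calpha ::
  "nat \<Rightarrow> (nat \<Rightarrow> nat set) \<Rightarrow> (nat \<Rightarrow> nat set) \<Rightarrow> (nat \<Rightarrow> nat \<Rightarrow> real)
   \<Rightarrow> (nat \<Rightarrow> nat \<Rightarrow> real) \<Rightarrow> (nat \<Rightarrow> nat \<Rightarrow> real) \<Rightarrow> nat \<Rightarrow> real" where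
  "Calpha n D S x aD aS k =
     (\<Sum>i\<in>{1..n}. (\<Sum>l\<in>D i. aD i l * ((x i k - x l k) * (x i k - x l k)))
                  - (\<Sum>j\<in>S i. aS i j * ((x i k - x j k) * (x i k - x j k))))"

definition sqnorm ::
  "nat \<Rightarrow> (nat \<Rightarrow> nat set) \<Rightarrow> (nat \<Rightarrow> nat set) \<Rightarrow> (nat \<Rightarrow> nat \<Rightarrow> real) \<Rightarrow> (nat \<Rightarrow> nat \<Rightarrow> real) \<Rightarrow> real" where
  "sqnorm n D S aD aS = (\<Sum>i\<in>{1..n}. (\<Sum>l\<in>D i. (aD i l)^2) + (\<Sum>j\<in>S i. (aS i j)^2))"

definition Dual ::
  "nat \<Rightarrow> nat \<Rightarrow> (nat \<Rightarrow> nat set) \<Rightarrow> (nat \<Rightarrow> nat set) \<Rightarrow> (nat \<Rightarrow> nat \<Rightarrow> real)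
   \<Rightarrow> real \<Rightarrow> real \<Rightarrow> real \<Rightarrow> real \<Rightarrow> (nat \<Rightarrow> nat \<Rightarrow> real) \<Rightarrow> (nat \<Rightarrow> nat \<Rightarrow> real) \<Rightarrow> real" where
  "Dual n p D S x L U \<eta> lam aD aS =
     - 1/4 * sqnorm n D S aD aS
     + (\<Sum>i\<in>{1..n}. (\<Sum>l\<in>D i. L * aD i l) + (\<Sum>j\<in>S i. (- U) * aS i j))
     - lam * \<eta> / 2 * (\<Sum>k\<in>{1..p}. (1 / (lam * \<eta>) * max (Calpha n D S x aD aS k - lam) 0)^2)"

definition dual_nonneg ::
  "nat \<Rightarrow> (nat \<Rightarrow> nat set) \<Rightarrow> (nat \<Rightarrow> nat set) \<Rightarrow> (nat \<Rightarrow> nat \<Rightarrow> real) \<Rightarrow> (nat \<Rightarrow> nat \<Rightarrow> real) \<Rightarrow> bool" where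
  "dual_nonneg n D S aD aS \<longleftrightarrow>
     (\<forall>i\<in>{1..n}. (\<forall>l\<in>D i. 0 \<le> aD i l) \<and> (\<forall>j\<in>S i. 0 \<le> aS i j))"

end

theory Submission
  imports Defs "HOL-Analysis.L2_Norm"
begin

text \<open>By the KKT conditions the dual optimum at \<open>\<lambda>\<close> is \<open>\<alpha>\<^sup>* = 2[t - C\<^sup>T m\<^sup>*]\<^sub>+\<close>, and
  \<open>m\<^sup>*\<^sub>k = [(C\<alpha>\<^sup>*)\<^sub>k - \<lambda>]\<^sub>+ / (\<lambda>\<eta>)\<close>, so it suffices to show \<open>(C\<alpha>\<^sup>*)\<^sub>k\<^sub>' \<le> \<lambda>\<close>.
  The dual optima at \<open>\<lambda>\<close> and \<open>\<lambda>\<^sub>0\<close> satisfy variational inequalities; testing each of them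
  with the other optimum rescaled by \<open>\<lambda>/\<lambda>\<^sub>0\<close> resp. \<open>\<lambda>\<^sub>0/\<lambda>\<close> and using that
  \<open>\<alpha> \<mapsto> [C\<alpha> - \<lambda>]\<^sub>+\<close> is monotone in \<open>\<alpha>/\<lambda>\<close> puts \<open>\<alpha>\<^sup>*\<close> into the ball with centre
  \<open>\<theta>\<alpha>\<^sub>0\<^sup>*\<close> and radius \<open>\<rho>\<parallel>\<alpha>\<^sub>0\<^sup>*\<parallel>\<close>, where \<open>\<theta> = (\<lambda>\<^sub>0 + \<lambda>)/(2\<lambda>\<^sub>0)\<close> and
  \<open>\<rho> = (\<lambda>\<^sub>0 - \<lambda>)/(2\<lambda>\<^sub>0)\<close>, hence into the ball with centre \<open>\<theta>\<alpha>\<^sub>0\<close> and radius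
  \<open>\<rho>\<parallel>\<alpha>\<^sub>0\<parallel> + \<epsilon>\<close>. For binary features and a descendant \<open>k'\<close> of \<open>k\<close>, \<open>(C\<alpha>)\<^sub>k\<^sub>'\<close> is
  bounded on \<open>\<alpha> \<ge> 0\<close> by the quantity \<open>a(\<alpha>)\<close> of the statement, and
  \<open>a(\<theta>\<alpha>\<^sub>0 + d) \<le> \<theta> a(\<alpha>\<^sub>0) + b\<parallel>d\<parallel>\<close>. So \<open>(C\<alpha>\<^sup>*)\<^sub>k\<^sub>' \<le> \<theta>a + (\<rho>\<parallel>\<alpha>\<^sub>0\<parallel> + \<epsilon>)b\<close>,
  and this is at most \<open>\<lambda>\<close> exactly when \<open>\<lambda> \<ge> \<lambda>'\<^sub>a\<close>.\<close>

section \<open>Primal and dual problems over an abstract index set\<close>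

definition cmul :: "'q set \<Rightarrow> ('q \<Rightarrow> 'k \<Rightarrow> real) \<Rightarrow> ('q \<Rightarrow> real) \<Rightarrow> 'k \<Rightarrow> real" where
  "cmul Q c v k = (\<Sum>q\<in>Q. v q * c q k)"

definition ctmul :: "'k set \<Rightarrow> ('q \<Rightarrow> 'k \<Rightarrow> real) \<Rightarrow> ('k \<Rightarrow> real) \<Rightarrow> 'q \<Rightarrow> real" where
  "ctmul Ks c m q = (\<Sum>k\<in>Ks. m k * c q k)"

lemma sum_mult_cmul_eq_sum_mult_ctmul:
  assumes "finite Q" "finite Ks"
  shows "(\<Sum>k\<in>Ks. m k * cmul Q c v k) = (\<Sum>q\<in>Q. v q * ctmul Ks c m q)"
  unfolding cmul_def ctmul_def sum_distrib_left
  by (subst sum.swap) (simp add: algebra_simps)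

lemma cmul_add_scaled: "cmul Q c (\<lambda>q. v q + s * d q) k = cmul Q c v k + s * cmul Q c d k"
  by (simp add: cmul_def sum.distrib sum_distrib_left algebra_simps)

lemma ctmul_add_single:
  assumes "finite Ks" "k \<in> Ks"
  shows "ctmul Ks c (\<lambda>j. m j + (if j = k then s else 0)) q = ctmul Ks c m q + s * c q k"
proof -
  have "ctmul Ks c (\<lambda>j. m j + (if j = k then s else 0)) q
      = (\<Sum>j\<in>Ks. m j * c q j + (if j = k then s * c q k else 0))"
    unfolding ctmul_def by (rule sum.cong) (auto simp: algebra_simps)
  with assms show ?thesis by (simp add: ctmul_def sum.distrib)
qed

definition primal :: "'q set \<Rightarrow> 'k set \<Rightarrow> ('q \<Rightarrow> 'k \<Rightarrow> real) \<Rightarrow> ('q \<Rightarrow> real) \<Rightarrow> real \<Rightarrow> real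
    \<Rightarrow> ('k \<Rightarrow> real) \<Rightarrow> real" where
  "primal Q Ks c t lam eta m = (\<Sum>q\<in>Q. sqhinge (t q) (ctmul Ks c m q))
     + lam * ((\<Sum>k\<in>Ks. m k) + eta / 2 * (\<Sum>k\<in>Ks. (m k)^2))"

text \<open>The primal-dual optimality relations \<open>m\<^sub>k = [(C\<alpha>)\<^sub>k - \<lambda>]\<^sub>+ / (\<lambda>\<eta>)\<close> and
  \<open>\<alpha> = 2[t - C\<^sup>T m]\<^sub>+\<close>.\<close>
definition primal_of_dual :: "'q set \<Rightarrow> ('q \<Rightarrow> 'k \<Rightarrow> real) \<Rightarrow> real \<Rightarrow> real \<Rightarrow> ('q \<Rightarrow> real) \<Rightarrow> 'k \<Rightarrow> real" where
  "primal_of_dual Q c lam eta v k = max (cmul Q c v k - lam) 0 / (lam * eta)"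

definition dual_of_primal :: "'k set \<Rightarrow> ('q \<Rightarrow> 'k \<Rightarrow> real) \<Rightarrow> ('q \<Rightarrow> real) \<Rightarrow> ('k \<Rightarrow> real) \<Rightarrow> 'q \<Rightarrow> real" where
  "dual_of_primal Ks c t m q = 2 * max (t q - ctmul Ks c m q) 0"

lemma dual_of_primal_nonneg: "0 \<le> dual_of_primal Ks c t m q"
  by (simp add: dual_of_primal_def)

definition dual :: "'q set \<Rightarrow> 'k set \<Rightarrow> ('q \<Rightarrow> 'k \<Rightarrow> real) \<Rightarrow> ('q \<Rightarrow> real) \<Rightarrow> real \<Rightarrow> real
    \<Rightarrow> ('q \<Rightarrow> real) \<Rightarrow> real" where
  "dual Q Ks c t lam eta v = - 1/4 * (\<Sum>q\<in>Q. (v q)^2) + (\<Sum>q\<in>Q. t q * v q)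
     - lam * eta / 2 * (\<Sum>k\<in>Ks. (primal_of_dual Q c lam eta v k)^2)"

definition primal_minimizer :: "'q set \<Rightarrow> 'k set \<Rightarrow> ('q \<Rightarrow> 'k \<Rightarrow> real) \<Rightarrow> ('q \<Rightarrow> real) \<Rightarrow> real
    \<Rightarrow> real \<Rightarrow> ('k \<Rightarrow> real) \<Rightarrow> bool" where
  "primal_minimizer Q Ks c t lam eta m \<longleftrightarrow> (\<forall>k\<in>Ks. 0 \<le> m k) \<and>
     (\<forall>m'. (\<forall>k\<in>Ks. 0 \<le> m' k) \<longrightarrow> primal Q Ks c t lam eta m \<le> primal Q Ks c t lam eta m')"

definition dual_maximizer :: "'q set \<Rightarrow> 'k set \<Rightarrow> ('q \<Rightarrow> 'k \<Rightarrow> real) \<Rightarrow> ('q \<Rightarrow> real) \<Rightarrow> real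
    \<Rightarrow> real \<Rightarrow> ('q \<Rightarrow> real) \<Rightarrow> bool" where
  "dual_maximizer Q Ks c t lam eta v \<longleftrightarrow> (\<forall>q\<in>Q. 0 \<le> v q) \<and>
     (\<forall>w. (\<forall>q\<in>Q. 0 \<le> w q) \<longrightarrow> dual Q Ks c t lam eta w \<le> dual Q Ks c t lam eta v)"

text \<open>\<open>dual_grad\<close> is the gradient of \<open>dual\<close>, and \<open>dual_stationary\<close> is its first-order
  optimality condition on the nonnegative orthant.\<close>
definition dual_grad :: "'q set \<Rightarrow> 'k set \<Rightarrow> ('q \<Rightarrow> 'k \<Rightarrow> real) \<Rightarrow> ('q \<Rightarrow> real) \<Rightarrow> real
    \<Rightarrow> real \<Rightarrow> ('q \<Rightarrow> real) \<Rightarrow> 'q \<Rightarrow> real" where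
  "dual_grad Q Ks c t lam eta v q = t q - v q / 2 - ctmul Ks c (primal_of_dual Q c lam eta v) q"

definition dual_stationary :: "'q set \<Rightarrow> 'k set \<Rightarrow> ('q \<Rightarrow> 'k \<Rightarrow> real) \<Rightarrow> ('q \<Rightarrow> real) \<Rightarrow> real
    \<Rightarrow> real \<Rightarrow> ('q \<Rightarrow> real) \<Rightarrow> bool" where
  "dual_stationary Q Ks c t lam eta v \<longleftrightarrow>
     (\<forall>w. (\<forall>q\<in>Q. 0 \<le> w q) \<longrightarrow> (\<Sum>q\<in>Q. dual_grad Q Ks c t lam eta v q * (w q - v q)) \<le> 0)"

lemma sq_max0_add_le:
  fixes y d :: real
  shows "(max (y + d) 0)^2 \<le> (max y 0)^2 + 2 * max y 0 * d + d^2"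
proof (cases "y \<le> 0")
  case True
  then show ?thesis by (cases "y + d \<le> 0") (auto simp: max_def power2_eq_square intro: mult_mono)
next
  case False
  have "0 \<le> (y + d)^2" by simp
  with False show ?thesis by (cases "y + d \<le> 0") (auto simp: max_def power2_eq_square algebra_simps)
qed

lemma nonneg_if_quadratic_lower_bound:
  fixes g C \<delta> :: real
  assumes "0 < \<delta>" and bound: "\<And>s. 0 < s \<Longrightarrow> s \<le> \<delta> \<Longrightarrow> 0 \<le> s * g + s^2 * C"
  shows "0 \<le> g"
proof (rule ccontr)
  assume "\<not> 0 \<le> g"
  define s where "s = min \<delta> (- g / (2 * (\<bar>C\<bar> + 1)))"
  have "0 < - g / (2 * (\<bar>C\<bar> + 1))" using \<open>\<not> 0 \<le> g\<close> by (intro divide_pos_pos) auto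
  then have s: "0 < s" "s \<le> \<delta>" using \<open>0 < \<delta>\<close> by (auto simp: s_def)
  have "s * \<bar>C\<bar> \<le> - g / 2"
  proof -
    have "s * \<bar>C\<bar> \<le> - g / (2 * (\<bar>C\<bar> + 1)) * (\<bar>C\<bar> + 1)"
      using s by (intro mult_mono) (auto simp: s_def)
    also have "\<dots> = - g / 2" by (simp add: field_simps add_pos_nonneg)
    finally show ?thesis .
  qed
  then have "g + s * C < 0" using \<open>\<not> 0 \<le> g\<close> abs_ge_self[of C] mult_left_mono[of C "\<bar>C\<bar>" s] s by linarith
  then have "s * (g + s * C) < 0" using s by (simp add: mult_pos_neg)
  with bound[OF s] show False by (simp add: power2_eq_square algebra_simps)
qed

lemma sqhinge_add_le: "sqhinge s (z + d) \<le> sqhinge s z - 2 * max (s - z) 0 * d + d^2"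
  using sq_max0_add_le[of "s - z" "- d"] by (simp add: sqhinge_def algebra_simps)

lemma primal_add_single_le:
  assumes "finite Ks" "k \<in> Ks"
  shows "primal Q Ks c t lam eta (\<lambda>j. m j + (if j = k then s else 0))
    \<le> primal Q Ks c t lam eta m + s * (lam * (1 + eta * m k) - cmul Q c (dual_of_primal Ks c t m) k)
      + s^2 * ((\<Sum>q\<in>Q. (c q k)^2) + lam * eta / 2)"
proof -
  define m' where "m' = (\<lambda>j. m j + (if j = k then s else 0))"
  have "(\<Sum>q\<in>Q. sqhinge (t q) (ctmul Ks c m' q))
      \<le> (\<Sum>q\<in>Q. sqhinge (t q) (ctmul Ks c m q) - 2 * max (t q - ctmul Ks c m q) 0 * (s * c q k) + (s * c q k)^2)"
    unfolding m'_def ctmul_add_single[OF assms] by (rule sum_mono) (rule sqhinge_add_le)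
  also have "\<dots> = (\<Sum>q\<in>Q. sqhinge (t q) (ctmul Ks c m q)) - s * cmul Q c (dual_of_primal Ks c t m) k
      + s^2 * (\<Sum>q\<in>Q. (c q k)^2)"
    by (simp add: sum.distrib sum_subtractf cmul_def dual_of_primal_def sum_distrib_left
        power_mult_distrib algebra_simps)
  finally have loss: "(\<Sum>q\<in>Q. sqhinge (t q) (ctmul Ks c m' q)) \<le> \<dots>" .
  have "(\<Sum>j\<in>Ks. m' j) = (\<Sum>j\<in>Ks. m j) + s"
    using assms by (simp add: m'_def sum.distrib)
  moreover have "(\<Sum>j\<in>Ks. (m' j)^2) = (\<Sum>j\<in>Ks. (m j)^2 + (if j = k then 2 * m k * s + s^2 else 0))"
    by (rule sum.cong) (auto simp: m'_def power2_eq_square algebra_simps)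
  then have "(\<Sum>j\<in>Ks. (m' j)^2) = (\<Sum>j\<in>Ks. (m j)^2) + 2 * m k * s + s^2"
    using assms by (simp add: sum.distrib)
  ultimately show ?thesis
    using loss unfolding m'_def[symmetric] primal_def by (simp add: algebra_simps power2_eq_square)
qed

text \<open>The first-order coefficient of the perturbation vanishes at a positive coordinate of the
  minimizer and is nonnegative at a zero one.\<close>
lemma primal_minimizer_eq_primal_of_dual:
  assumes "finite Ks" "0 < lam" "0 < eta" and min: "primal_minimizer Q Ks c t lam eta m" and "k \<in> Ks"
  shows "m k = primal_of_dual Q c lam eta (dual_of_primal Ks c t m) k"
proof -
  define g where "g = lam * (1 + eta * m k) - cmul Q c (dual_of_primal Ks c t m) k"
  define C where "C = (\<Sum>q\<in>Q. (c q k)^2) + lam * eta / 2"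
  have m_nonneg: "\<forall>j\<in>Ks. 0 \<le> m j" and m_le: "\<And>m'. \<forall>j\<in>Ks. 0 \<le> m' j \<Longrightarrow>
      primal Q Ks c t lam eta m \<le> primal Q Ks c t lam eta m'"
    using min by (auto simp: primal_minimizer_def)
  have perturb: "\<forall>j\<in>Ks. 0 \<le> m j + (if j = k then s else 0) \<Longrightarrow> 0 \<le> s * g + s^2 * C" for s
    using m_le primal_add_single_le[OF assms(1,5), of Q c t lam eta m s] unfolding g_def C_def
    by fastforce
  have "0 \<le> g"
    by (rule nonneg_if_quadratic_lower_bound[of 1]) (use m_nonneg in \<open>auto intro!: perturb\<close>)
  show ?thesis
  proof (cases "m k = 0")
    case True
    then show ?thesis using \<open>0 \<le> g\<close> by (simp add: primal_of_dual_def g_def)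
  next
    case False
    then have "0 < m k" using m_nonneg \<open>k \<in> Ks\<close> by force
    have "0 \<le> - g"
    proof (rule nonneg_if_quadratic_lower_bound[of "m k"])
      fix s :: real assume "0 < s" "s \<le> m k"
      then show "0 \<le> s * - g + s^2 * C" using perturb[of "- s"] m_nonneg by auto
    qed fact
    with \<open>0 \<le> g\<close> have "cmul Q c (dual_of_primal Ks c t m) k - lam = lam * eta * m k"
      by (simp add: g_def algebra_simps)
    then show ?thesis using \<open>0 < m k\<close> assms(2,3) by (simp add: primal_of_dual_def)
  qed
qed

lemma dual_stationary_dual_of_primal:
  assumes "finite Q" "finite Ks"
    and kkt: "\<And>k. k \<in> Ks \<Longrightarrow> m k = primal_of_dual Q c lam eta (dual_of_primal Ks c t m) k"
  shows "dual_stationary Q Ks c t lam eta (dual_of_primal Ks c t m)"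
  unfolding dual_stationary_def
proof (intro allI impI)
  fix w :: "_ \<Rightarrow> real" assume w: "\<forall>q\<in>Q. 0 \<le> w q"
  have "ctmul Ks c (primal_of_dual Q c lam eta (dual_of_primal Ks c t m)) = ctmul Ks c m"
    unfolding ctmul_def by (auto simp: kkt intro!: sum.cong)
  then have grad: "dual_grad Q Ks c t lam eta (dual_of_primal Ks c t m) q = min (t q - ctmul Ks c m q) 0" for q
    by (simp add: dual_grad_def dual_of_primal_def min_def max_def)
  show "(\<Sum>q\<in>Q. dual_grad Q Ks c t lam eta (dual_of_primal Ks c t m) q * (w q - dual_of_primal Ks c t m q)) \<le> 0"
    unfolding grad using w
    by (intro sum_nonpos) (auto simp: dual_of_primal_def min_def max_def mult_nonpos_nonneg)
qed

lemma half_sq_primal_of_dual_add_le: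
  assumes "0 < lam" "0 < eta"
  shows "lam * eta / 2 * (primal_of_dual Q c lam eta (\<lambda>q. v q + s * d q) k)^2
    \<le> lam * eta / 2 * (primal_of_dual Q c lam eta v k)^2 + s * (primal_of_dual Q c lam eta v k * cmul Q c d k)
      + s^2 * ((cmul Q c d k)^2 / (2 * lam * eta))"
proof -
  define y where "y = max (cmul Q c v k - lam) 0"
  define e where "e = s * cmul Q c d k"
  have half_sq: "lam * eta / 2 * (z / (lam * eta))^2 = z^2 / (2 * lam * eta)" for z
    using assms by (simp add: power2_eq_square field_simps)
  have "lam * eta / 2 * (primal_of_dual Q c lam eta (\<lambda>q. v q + s * d q) k)^2
      = (max (cmul Q c v k - lam + e) 0)^2 / (2 * lam * eta)"
    unfolding primal_of_dual_def cmul_add_scaled half_sq by (simp add: e_def algebra_simps)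
  also have "\<dots> \<le> (y^2 + 2 * y * e + e^2) / (2 * lam * eta)"
    unfolding y_def using assms by (intro divide_right_mono sq_max0_add_le) auto
  also have "\<dots> = lam * eta / 2 * (y / (lam * eta))^2 + s * (y / (lam * eta) * cmul Q c d k)
      + s^2 * ((cmul Q c d k)^2 / (2 * lam * eta))"
    unfolding half_sq e_def using assms by (simp add: power2_eq_square field_simps)
  finally show ?thesis by (simp add: primal_of_dual_def y_def)
qed

lemma dual_add_scaled_ge:
  assumes "finite Q" "finite Ks" "0 < lam" "0 < eta"
  shows "dual Q Ks c t lam eta (\<lambda>q. v q + s * d q) \<ge> dual Q Ks c t lam eta v
      + s * (\<Sum>q\<in>Q. dual_grad Q Ks c t lam eta v q * d q)
      - s^2 * ((\<Sum>q\<in>Q. (d q)^2) / 4 + (\<Sum>k\<in>Ks. (cmul Q c d k)^2) / (2 * lam * eta))"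
proof -
  let ?M = "primal_of_dual Q c lam eta v"
  have "lam * eta / 2 * (\<Sum>k\<in>Ks. (primal_of_dual Q c lam eta (\<lambda>q. v q + s * d q) k)^2)
      \<le> (\<Sum>k\<in>Ks. lam * eta / 2 * (?M k)^2 + s * (?M k * cmul Q c d k) + s^2 * ((cmul Q c d k)^2 / (2 * lam * eta)))"
    unfolding sum_distrib_left using assms(3,4) by (intro sum_mono half_sq_primal_of_dual_add_le)
  also have "\<dots> = lam * eta / 2 * (\<Sum>k\<in>Ks. (?M k)^2) + s * (\<Sum>q\<in>Q. d q * ctmul Ks c ?M q)
      + s^2 * ((\<Sum>k\<in>Ks. (cmul Q c d k)^2) / (2 * lam * eta))"
    by (simp add: sum.distrib sum_distrib_left sum_divide_distrib
        sum_mult_cmul_eq_sum_mult_ctmul[OF assms(1,2), symmetric])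
  finally have reg: "lam * eta / 2 * (\<Sum>k\<in>Ks. (primal_of_dual Q c lam eta (\<lambda>q. v q + s * d q) k)^2) \<le> \<dots>" .
  have sq: "(\<Sum>q\<in>Q. (v q + s * d q)^2)
      = (\<Sum>q\<in>Q. (v q)^2) + 2 * s * (\<Sum>q\<in>Q. v q * d q) + s^2 * (\<Sum>q\<in>Q. (d q)^2)"
    by (simp add: power2_sum sum.distrib sum_distrib_left power_mult_distrib algebra_simps)
  have lin: "(\<Sum>q\<in>Q. t q * (v q + s * d q)) = (\<Sum>q\<in>Q. t q * v q) + s * (\<Sum>q\<in>Q. t q * d q)"
    by (simp add: sum.distrib sum_distrib_left algebra_simps)
  have "(\<Sum>q\<in>Q. dual_grad Q Ks c t lam eta v q * d q)
      = (\<Sum>q\<in>Q. t q * d q) - (\<Sum>q\<in>Q. v q * d q) / 2 - (\<Sum>q\<in>Q. d q * ctmul Ks c ?M q)"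
    by (simp add: dual_grad_def sum_subtractf sum.distrib sum_divide_distrib algebra_simps)
  then have "s * (\<Sum>q\<in>Q. dual_grad Q Ks c t lam eta v q * d q)
      = s * (\<Sum>q\<in>Q. t q * d q) - s * (\<Sum>q\<in>Q. v q * d q) / 2 - s * (\<Sum>q\<in>Q. d q * ctmul Ks c ?M q)"
    by (simp only: right_diff_distrib times_divide_eq_right)
  with reg show ?thesis unfolding dual_def sq lin by (simp add: algebra_simps)
qed

lemma dual_maximizer_imp_stationary:
  assumes "finite Q" "finite Ks" "0 < lam" "0 < eta" and max: "dual_maximizer Q Ks c t lam eta v"
  shows "dual_stationary Q Ks c t lam eta v"
  unfolding dual_stationary_def
proof (intro allI impI)
  fix w :: "_ \<Rightarrow> real" assume w: "\<forall>q\<in>Q. 0 \<le> w q"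
  define G where "G = (\<Sum>q\<in>Q. dual_grad Q Ks c t lam eta v q * (w q - v q))"
  define C where "C = (\<Sum>q\<in>Q. (w q - v q)^2) / 4 + (\<Sum>k\<in>Ks. (cmul Q c (\<lambda>q. w q - v q) k)^2) / (2 * lam * eta)"
  have "0 \<le> - G"
  proof (rule nonneg_if_quadratic_lower_bound[of 1])
    fix s :: real assume s: "0 < s" "s \<le> 1"
    have "v q + s * (w q - v q) = (1 - s) * v q + s * w q" for q
      by (simp add: algebra_simps)
    then have "\<forall>q\<in>Q. 0 \<le> v q + s * (w q - v q)"
      using s w max by (simp add: dual_maximizer_def)
    then have "dual Q Ks c t lam eta (\<lambda>q. v q + s * (w q - v q)) \<le> dual Q Ks c t lam eta v"
      using max by (simp add: dual_maximizer_def)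
    with dual_add_scaled_ge[OF assms(1-4), of c t v s "\<lambda>q. w q - v q"]
    show "0 \<le> s * - G + s^2 * C" unfolding G_def C_def by simp
  qed simp
  then show "G \<le> 0" by simp
qed

section \<open>The dual ball\<close>

lemma mono_diff_mult_nonpos:
  fixes f :: "real \<Rightarrow> real"
  assumes "mono f"
  shows "(f x - f y) * (y - x) \<le> 0"
proof (cases "x \<le> y")
  case True
  then show ?thesis using monoD[OF assms True] by (simp add: mult_nonpos_nonneg)
next
  case False
  then show ?thesis using monoD[OF assms, of y x] by (simp add: mult_nonneg_nonpos)
qed

text \<open>Monotonicity of \<open>v \<mapsto> primal_of_dual\<close> in the rescaled variable \<open>v / lam\<close>.\<close>
lemma sum_ctmul_primal_of_dual_diff_mult_nonpos:
  assumes "finite Q" "finite Ks" "0 < lam" "0 < lam0" "0 < eta"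
  shows "(\<Sum>q\<in>Q. (ctmul Ks c (primal_of_dual Q c lam0 eta v0) q - ctmul Ks c (primal_of_dual Q c lam eta v1) q)
      * (v1 q / lam - v0 q / lam0)) \<le> 0"
proof -
  define f where "f y = max (y - 1) 0 / eta" for y
  have "mono f"
    unfolding f_def using assms(5) by (intro monoI divide_right_mono) auto
  have f: "primal_of_dual Q c l eta v k = f (cmul Q c v k / l)" if "0 < l" for l v k
    using that assms(5) by (simp add: primal_of_dual_def f_def max_def field_simps)
  define dM where "dM k = primal_of_dual Q c lam0 eta v0 k - primal_of_dual Q c lam eta v1 k" for k
  define z where "z q = v1 q / lam - v0 q / lam0" for q
  have "(\<Sum>q\<in>Q. (ctmul Ks c (primal_of_dual Q c lam0 eta v0) q - ctmul Ks c (primal_of_dual Q c lam eta v1) q)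
      * z q) = (\<Sum>q\<in>Q. z q * ctmul Ks c dM q)"
    by (simp add: ctmul_def dM_def sum_subtractf right_diff_distrib mult.commute)
  also have "\<dots> = (\<Sum>k\<in>Ks. dM k * cmul Q c z k)"
    by (rule sum_mult_cmul_eq_sum_mult_ctmul[OF assms(1,2), symmetric])
  also have "\<dots> = (\<Sum>k\<in>Ks. (f (cmul Q c v0 k / lam0) - f (cmul Q c v1 k / lam))
      * (cmul Q c v1 k / lam - cmul Q c v0 k / lam0))"
    using assms(3,4) by (simp add: dM_def f z_def cmul_def sum_subtractf sum_divide_distrib
        diff_divide_distrib left_diff_distrib)
  also have "\<dots> \<le> 0"
    by (intro sum_nonpos mono_diff_mult_nonpos \<open>mono f\<close>)
  finally show ?thesis unfolding z_def .
qed

text \<open>Each variational inequality is tested with the other optimum, rescaled by \<open>lam / lam0\<close>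
  resp. \<open>lam0 / lam\<close>.\<close>
lemma dual_stationary_scaled_monotone:
  assumes fin: "finite Q" "finite Ks" and "0 < lam" "0 < lam0" "0 < eta"
    and nonneg: "\<forall>q\<in>Q. 0 \<le> v0 q" "\<forall>q\<in>Q. 0 \<le> v1 q"
    and stat0: "dual_stationary Q Ks c t lam0 eta v0"
    and stat1: "dual_stationary Q Ks c t lam eta v1"
  shows "(\<Sum>q\<in>Q. (v1 q - v0 q) * (v1 q / lam - v0 q / lam0)) \<le> 0"
proof -
  define z where "z q = v1 q / lam - v0 q / lam0" for q
  let ?g0 = "dual_grad Q Ks c t lam0 eta v0" and ?g1 = "dual_grad Q Ks c t lam eta v1"
  have e1: "lam / lam0 * v0 q - v1 q = - lam * z q" and e0: "lam0 / lam * v1 q - v0 q = lam0 * z q" for q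
    using assms(3,4) by (simp_all add: z_def field_simps)
  have "(\<Sum>q\<in>Q. ?g1 q * (lam / lam0 * v0 q - v1 q)) \<le> 0"
    using stat1 nonneg assms(3,4) unfolding dual_stationary_def by simp
  then have "- lam * (\<Sum>q\<in>Q. ?g1 q * z q) \<le> 0"
    unfolding e1 by (simp add: sum_distrib_left algebra_simps)
  then have g1: "0 \<le> (\<Sum>q\<in>Q. ?g1 q * z q)"
    using assms(3) by (simp add: zero_le_mult_iff)
  have "(\<Sum>q\<in>Q. ?g0 q * (lam0 / lam * v1 q - v0 q)) \<le> 0"
    using stat0 nonneg assms(3,4) unfolding dual_stationary_def by simp
  then have "lam0 * (\<Sum>q\<in>Q. ?g0 q * z q) \<le> 0"
    unfolding e0 by (simp add: sum_distrib_left algebra_simps)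
  then have g0: "(\<Sum>q\<in>Q. ?g0 q * z q) \<le> 0"
    using assms(4) by (simp add: mult_le_0_iff)
  let ?dM = "\<lambda>q. ctmul Ks c (primal_of_dual Q c lam0 eta v0) q - ctmul Ks c (primal_of_dual Q c lam eta v1) q"
  have "(v1 q - v0 q) * z q = 2 * (?g0 q * z q) - 2 * (?g1 q * z q) + 2 * (?dM q * z q)" for q
    by (simp add: dual_grad_def algebra_simps)
  then have "(\<Sum>q\<in>Q. (v1 q - v0 q) * z q)
      = 2 * (\<Sum>q\<in>Q. ?g0 q * z q) - 2 * (\<Sum>q\<in>Q. ?g1 q * z q) + 2 * (\<Sum>q\<in>Q. ?dM q * z q)"
    by (simp only: sum.distrib sum_subtractf sum_distrib_left)
  also have "\<dots> \<le> 0"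
    using g0 g1 sum_ctmul_primal_of_dual_diff_mult_nonpos[OF fin assms(3-5), of c v0 v1]
    unfolding z_def by linarith
  finally show ?thesis unfolding z_def .
qed

lemma dual_stationary_ball:
  assumes "finite Q" "finite Ks" "0 < lam" "lam \<le> lam0" "0 < eta"
    and "\<forall>q\<in>Q. 0 \<le> v0 q" "\<forall>q\<in>Q. 0 \<le> v1 q"
    and "dual_stationary Q Ks c t lam0 eta v0" "dual_stationary Q Ks c t lam eta v1"
  shows "L2_set (\<lambda>q. v1 q - (lam0 + lam) / (2 * lam0) * v0 q) Q \<le> (lam0 - lam) / (2 * lam0) * L2_set v0 Q"
proof -
  have "0 < lam0" using assms(3,4) by linarith
  have "(\<Sum>q\<in>Q. (v1 q - (lam0 + lam) / (2 * lam0) * v0 q)^2) - ((lam0 - lam) / (2 * lam0))^2 * (\<Sum>q\<in>Q. (v0 q)^2)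
      = lam * (\<Sum>q\<in>Q. (v1 q - v0 q) * (v1 q / lam - v0 q / lam0))"
    unfolding sum_distrib_left sum_subtractf[symmetric]
    by (rule sum.cong) (use assms(3) \<open>0 < lam0\<close> in \<open>auto simp: field_simps power2_eq_square\<close>)
  also have "\<dots> \<le> 0"
    using dual_stationary_scaled_monotone[OF assms(1-3) \<open>0 < lam0\<close> assms(5-9)] assms(3)
    by (simp add: mult_le_0_iff)
  finally have "(\<Sum>q\<in>Q. (v1 q - (lam0 + lam) / (2 * lam0) * v0 q)^2)
      \<le> ((lam0 - lam) / (2 * lam0))^2 * (\<Sum>q\<in>Q. (v0 q)^2)" by simp
  then have "L2_set (\<lambda>q. v1 q - (lam0 + lam) / (2 * lam0) * v0 q) Q
      \<le> sqrt (((lam0 - lam) / (2 * lam0))^2 * (\<Sum>q\<in>Q. (v0 q)^2))"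
    unfolding L2_set_def by (rule real_sqrt_le_mono)
  also have "\<dots> = (lam0 - lam) / (2 * lam0) * L2_set v0 Q"
    using assms(4) \<open>0 < lam0\<close> by (simp add: L2_set_def real_sqrt_mult)
  finally show ?thesis .
qed

lemma L2_set_ball_perturb:
  assumes "L2_set (\<lambda>q. u q - \<theta> * w q) Q \<le> \<rho> * L2_set w Q" and "L2_set (\<lambda>q. w' q - w q) Q \<le> \<epsilon>"
    and "0 \<le> \<theta>" "0 \<le> \<rho>" "\<theta> + \<rho> = 1"
  shows "L2_set (\<lambda>q. u q - \<theta> * w' q) Q \<le> \<rho> * L2_set w' Q + \<epsilon>"
proof -
  have diff: "L2_set (\<lambda>q. w q - w' q) Q \<le> \<epsilon>"
    using assms(2) by (simp add: L2_set_def power2_commute)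
  have "L2_set w Q \<le> L2_set w' Q + \<epsilon>"
  proof -
    have "L2_set w Q = L2_set (\<lambda>q. w' q + (w q - w' q)) Q" by simp
    also have "\<dots> \<le> L2_set w' Q + L2_set (\<lambda>q. w q - w' q) Q" by (rule L2_set_triangle_ineq)
    finally show ?thesis using diff by linarith
  qed
  have "L2_set (\<lambda>q. u q - \<theta> * w' q) Q = L2_set (\<lambda>q. (u q - \<theta> * w q) + \<theta> * (w q - w' q)) Q"
    by (simp add: algebra_simps)
  also have "\<dots> \<le> L2_set (\<lambda>q. u q - \<theta> * w q) Q + L2_set (\<lambda>q. \<theta> * (w q - w' q)) Q"
    by (rule L2_set_triangle_ineq)
  also have "\<dots> = L2_set (\<lambda>q. u q - \<theta> * w q) Q + \<theta> * L2_set (\<lambda>q. w q - w' q) Q"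
    using assms(3) by (simp add: L2_set_right_distrib)
  also have "\<dots> \<le> \<rho> * (L2_set w' Q + \<epsilon>) + \<theta> * \<epsilon>"
    using assms(1) mult_left_mono[OF \<open>L2_set w Q \<le> L2_set w' Q + \<epsilon>\<close> assms(4)]
      mult_left_mono[OF diff assms(3)] by linarith
  also have "\<dots> = \<rho> * L2_set w' Q + (\<theta> + \<rho>) * \<epsilon>"
    by (simp add: algebra_simps)
  finally show ?thesis using assms(5) by simp
qed

lemma dual_of_primal_near_scaled_dual:
  assumes fin: "finite Q" "finite Ks" and "0 < lam" "lam \<le> lam0" "0 < eta"
    and "dual_maximizer Q Ks c t lam0 eta v0s" and min: "primal_minimizer Q Ks c t lam eta m"
    and "L2_set (\<lambda>q. v0 q - v0s q) Q \<le> \<epsilon>"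
  shows "L2_set (\<lambda>q. dual_of_primal Ks c t m q - (lam0 + lam) / (2 * lam0) * v0 q) Q
    \<le> (lam0 - lam) / (2 * lam0) * L2_set v0 Q + \<epsilon>"
proof (rule L2_set_ball_perturb)
  have "0 < lam0" using assms(3,4) by linarith
  have "dual_stationary Q Ks c t lam eta (dual_of_primal Ks c t m)"
    using primal_minimizer_eq_primal_of_dual[OF fin(2) assms(3,5) min]
    by (intro dual_stationary_dual_of_primal fin) auto
  moreover have "dual_stationary Q Ks c t lam0 eta v0s"
    by (rule dual_maximizer_imp_stationary) (use fin \<open>0 < lam0\<close> assms(5,6) in auto)
  ultimately show "L2_set (\<lambda>q. dual_of_primal Ks c t m q - (lam0 + lam) / (2 * lam0) * v0s q) Q
      \<le> (lam0 - lam) / (2 * lam0) * L2_set v0s Q"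
    using assms(6) by (intro dual_stationary_ball[OF fin assms(3-5)])
      (simp_all add: dual_maximizer_def dual_of_primal_nonneg)
  show "0 \<le> (lam0 + lam) / (2 * lam0)" "0 \<le> (lam0 - lam) / (2 * lam0)"
    "(lam0 + lam) / (2 * lam0) + (lam0 - lam) / (2 * lam0) = 1"
    using assms(3,4) \<open>0 < lam0\<close> by (auto simp: field_simps)
qed (fact assms(8))

section \<open>Pairs of graphs\<close>

text \<open>\<open>Inl (i, l)\<close> indexes the different-class pair \<open>(i, l)\<close>, \<open>l \<in> D i\<close>, and \<open>Inr (i, j)\<close> the
  same-class pair \<open>(i, j)\<close>, \<open>j \<in> S i\<close>; \<open>pair_coef x q\<close> is the column of \<open>C\<close> belonging to \<open>q\<close>.\<close>
type_synonym pair = "(nat \<times> nat) + (nat \<times> nat)"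

definition pairs :: "nat \<Rightarrow> (nat \<Rightarrow> nat set) \<Rightarrow> (nat \<Rightarrow> nat set) \<Rightarrow> pair set" where
  "pairs n D S = (SIGMA i:{1..n}. D i) <+> (SIGMA i:{1..n}. S i)"

definition pair_vec :: "(nat \<Rightarrow> nat \<Rightarrow> real) \<Rightarrow> (nat \<Rightarrow> nat \<Rightarrow> real) \<Rightarrow> pair \<Rightarrow> real" where
  "pair_vec aD aS q = (case q of Inl (i, l) \<Rightarrow> aD i l | Inr (i, j) \<Rightarrow> aS i j)"

definition pair_coef :: "(nat \<Rightarrow> nat \<Rightarrow> real) \<Rightarrow> pair \<Rightarrow> nat \<Rightarrow> real" where
  "pair_coef x q k = (case q of Inl (i, l) \<Rightarrow> (x i k - x l k) * (x i k - x l k)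
                              | Inr (i, j) \<Rightarrow> - ((x i k - x j k) * (x i k - x j k)))"

definition pair_target :: "real \<Rightarrow> real \<Rightarrow> pair \<Rightarrow> real" where
  "pair_target L U q = (case q of Inl _ \<Rightarrow> L | Inr _ \<Rightarrow> - U)"

lemma pair_vec_simps [simp]: "pair_vec aD aS (Inl (i, l)) = aD i l" "pair_vec aD aS (Inr (i, j)) = aS i j"
  by (simp_all add: pair_vec_def)

lemma pair_coef_simps [simp]:
  "pair_coef x (Inl (i, l)) k = (x i k - x l k) * (x i k - x l k)"
  "pair_coef x (Inr (i, j)) k = - ((x i k - x j k) * (x i k - x j k))"
  by (simp_all add: pair_coef_def)

lemma pair_target_simps [simp]: "pair_target L U (Inl a) = L" "pair_target L U (Inr a) = - U"
  by (simp_all add: pair_target_def)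

lemma pair_vec_eta: "pair_vec (\<lambda>i l. w (Inl (i, l))) (\<lambda>i j. w (Inr (i, j))) = w"
proof
  fix q show "pair_vec (\<lambda>i l. w (Inl (i, l))) (\<lambda>i j. w (Inr (i, j))) q = w q"
    by (cases q) auto
qed

lemma pair_vec_diff:
  "pair_vec (\<lambda>i l. aD i l - bD i l) (\<lambda>i j. aS i j - bS i j) = (\<lambda>q. pair_vec aD aS q - pair_vec bD bS q)"
  by (auto simp: pair_vec_def split: sum.split)

locale pair_sets =
  fixes n :: nat and D S :: "nat \<Rightarrow> nat set"
  assumes D_sub: "\<forall>i\<in>{1..n}. D i \<subseteq> {1..n}" and S_sub: "\<forall>i\<in>{1..n}. S i \<subseteq> {1..n}"
begin

lemma finite_D: "\<forall>i\<in>{1..n}. finite (D i)" and finite_S: "\<forall>i\<in>{1..n}. finite (S i)"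
  using D_sub S_sub by (meson finite_atLeastAtMost finite_subset)+

lemma finite_pairs: "finite (pairs n D S)"
  unfolding pairs_def using finite_D finite_S by (intro finite_Plus finite_SigmaI) auto

lemma sum_pairs:
  "(\<Sum>q\<in>pairs n D S. f q) = (\<Sum>i\<in>{1..n}. (\<Sum>l\<in>D i. f (Inl (i, l))) + (\<Sum>j\<in>S i. f (Inr (i, j))))"
proof -
  have "finite (SIGMA i:{1..n}. D i)" "finite (SIGMA i:{1..n}. S i)"
    using finite_D finite_S by (auto intro: finite_SigmaI)
  then have "(\<Sum>q\<in>pairs n D S. f q)
      = (\<Sum>z\<in>(SIGMA i:{1..n}. D i). f (Inl z)) + (\<Sum>z\<in>(SIGMA i:{1..n}. S i). f (Inr z))"
    unfolding pairs_def by (simp add: sum.Plus comp_def)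
  also have "\<dots> = (\<Sum>i\<in>{1..n}. \<Sum>l\<in>D i. f (Inl (i, l))) + (\<Sum>i\<in>{1..n}. \<Sum>j\<in>S i. f (Inr (i, j)))"
    using finite_D finite_S by (simp add: sum.Sigma split_def)
  finally show ?thesis by (simp add: sum.distrib)
qed

lemma sqrt_sqnorm_eq_L2_set: "sqrt (sqnorm n D S aD aS) = L2_set (pair_vec aD aS) (pairs n D S)"
  by (simp add: sqnorm_def L2_set_def sum_pairs)

lemma Primal_eq_primal:
  "Primal n p D S x L U \<eta> lam m = primal (pairs n D S) {1..p} (pair_coef x) (pair_target L U) lam \<eta> m"
  by (simp add: Primal_def primal_def sum_pairs ctmul_def mc_def sum_negf)

lemma Dual_eq_dual:
  "Dual n p D S x L U \<eta> lam aD aS = dual (pairs n D S) {1..p} (pair_coef x) (pair_target L U) lam \<eta> (pair_vec aD aS)"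
  by (simp add: Dual_def dual_def sqnorm_def Calpha_def primal_of_dual_def cmul_def sum_pairs sum_negf)

lemma dual_nonneg_iff: "dual_nonneg n D S aD aS \<longleftrightarrow> (\<forall>q\<in>pairs n D S. 0 \<le> pair_vec aD aS q)"
  unfolding dual_nonneg_def pairs_def by (force simp del: One_nat_def)

lemma primal_minimizer_pairs:
  assumes "\<forall>k\<in>{1..p}. 0 \<le> m k"
    and "\<And>m'. \<forall>k\<in>{1..p}. 0 \<le> m' k \<Longrightarrow> Primal n p D S x L U \<eta> lam m \<le> Primal n p D S x L U \<eta> lam m'"
  shows "primal_minimizer (pairs n D S) {1..p} (pair_coef x) (pair_target L U) lam \<eta> m"
  using assms by (simp add: primal_minimizer_def Primal_eq_primal)

lemma dual_maximizer_pairs: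
  assumes "dual_nonneg n D S aD aS"
    and "\<And>bD bS. dual_nonneg n D S bD bS \<Longrightarrow> Dual n p D S x L U \<eta> lam bD bS \<le> Dual n p D S x L U \<eta> lam aD aS"
  shows "dual_maximizer (pairs n D S) {1..p} (pair_coef x) (pair_target L U) lam \<eta> (pair_vec aD aS)"
  unfolding dual_maximizer_def
proof (intro conjI allI impI)
  fix w :: "pair \<Rightarrow> real" assume "\<forall>q\<in>pairs n D S. 0 \<le> w q"
  then show "dual (pairs n D S) {1..p} (pair_coef x) (pair_target L U) lam \<eta> w
      \<le> dual (pairs n D S) {1..p} (pair_coef x) (pair_target L U) lam \<eta> (pair_vec aD aS)"
    using assms(2)[of "\<lambda>i l. w (Inl (i, l))" "\<lambda>i j. w (Inr (i, j))"]
    by (simp add: dual_nonneg_iff Dual_eq_dual pair_vec_eta)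
qed (use assms(1) in \<open>simp add: dual_nonneg_iff\<close>)

end

section \<open>Bounds for binary features\<close>

text \<open>\<open>screen_bound n D S x k \<alpha>\<close> is the quantity \<open>a\<close> of the statement evaluated at \<open>\<alpha>\<close>, and
  \<open>b\<close> is the norm of \<open>pair_weight x k\<close>.\<close>
definition screen_term :: "(nat \<Rightarrow> nat set) \<Rightarrow> (nat \<Rightarrow> nat set) \<Rightarrow> (nat \<Rightarrow> nat \<Rightarrow> real) \<Rightarrow> nat
    \<Rightarrow> (pair \<Rightarrow> real) \<Rightarrow> nat \<Rightarrow> real" where
  "screen_term D S x k v i = max (\<Sum>l\<in>D i. v (Inl (i, l)) * x l k)
     (x i k * ((\<Sum>l\<in>D i. v (Inl (i, l))) - (\<Sum>j\<in>S i. v (Inr (i, j)) * (1 - x j k))))"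

definition screen_bound :: "nat \<Rightarrow> (nat \<Rightarrow> nat set) \<Rightarrow> (nat \<Rightarrow> nat set) \<Rightarrow> (nat \<Rightarrow> nat \<Rightarrow> real) \<Rightarrow> nat
    \<Rightarrow> (pair \<Rightarrow> real) \<Rightarrow> real" where
  "screen_bound n D S x k v = (\<Sum>i\<in>{1..n}. screen_term D S x k v i)"

lemma screen_bound_pair_vec:
  "screen_bound n D S x k (pair_vec aD aS) = (\<Sum>i\<in>{1..n}. max (\<Sum>l\<in>D i. aD i l * x l k)
     (x i k * ((\<Sum>l\<in>D i. aD i l) - (\<Sum>j\<in>S i. aS i j * (1 - x j k)))))"
  by (simp add: screen_bound_def screen_term_def)

definition pair_weight :: "(nat \<Rightarrow> nat \<Rightarrow> real) \<Rightarrow> nat \<Rightarrow> pair \<Rightarrow> real" where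
  "pair_weight x k q = (case q of Inl (i, l) \<Rightarrow> max (x i k) (x l k) | Inr (i, j) \<Rightarrow> max (x i k) (x j k))"

lemma pair_weight_simps [simp]:
  "pair_weight x k (Inl (i, l)) = max (x i k) (x l k)" "pair_weight x k (Inr (i, j)) = max (x i k) (x j k)"
  by (simp_all add: pair_weight_def)

lemma pair_sum_le_screen_term:
  assumes bin': "\<And>j. j \<in> insert i (D i \<union> S i) \<Longrightarrow> x j k' = 0 \<or> x j k' = 1"
    and anti: "\<And>j. j \<in> insert i (D i \<union> S i) \<Longrightarrow> x j k' \<le> x j k"
    and bin: "x i k = 0 \<or> x i k = 1"
    and nonneg: "\<And>l. l \<in> D i \<Longrightarrow> 0 \<le> v (Inl (i, l))" "\<And>j. j \<in> S i \<Longrightarrow> 0 \<le> v (Inr (i, j))"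
  shows "(\<Sum>l\<in>D i. v (Inl (i, l)) * pair_coef x (Inl (i, l)) k') + (\<Sum>j\<in>S i. v (Inr (i, j)) * pair_coef x (Inr (i, j)) k')
    \<le> screen_term D S x k v i"
proof (cases "x i k' = 0")
  case True
  have "(\<Sum>l\<in>D i. v (Inl (i, l)) * pair_coef x (Inl (i, l)) k') \<le> (\<Sum>l\<in>D i. v (Inl (i, l)) * x l k)"
  proof (rule sum_mono)
    fix l assume "l \<in> D i"
    then have "pair_coef x (Inl (i, l)) k' \<le> x l k" using True bin'[of l] anti[of l] by auto
    then show "v (Inl (i, l)) * pair_coef x (Inl (i, l)) k' \<le> v (Inl (i, l)) * x l k"
      using nonneg(1)[OF \<open>l \<in> D i\<close>] by (rule mult_left_mono)
  qed
  moreover have "(\<Sum>j\<in>S i. v (Inr (i, j)) * pair_coef x (Inr (i, j)) k') \<le> 0"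
    by (rule sum_nonpos) (simp add: nonneg(2) mult_nonneg_nonpos)
  ultimately show ?thesis unfolding screen_term_def by linarith
next
  case False
  then have "x i k' = 1" using bin' by auto
  then have "x i k = 1" using anti[of i] bin by auto
  have "(\<Sum>l\<in>D i. v (Inl (i, l)) * pair_coef x (Inl (i, l)) k') \<le> (\<Sum>l\<in>D i. v (Inl (i, l)))"
  proof (rule sum_mono)
    fix l assume "l \<in> D i"
    then have "pair_coef x (Inl (i, l)) k' \<le> 1" using \<open>x i k' = 1\<close> bin'[of l] by auto
    then show "v (Inl (i, l)) * pair_coef x (Inl (i, l)) k' \<le> v (Inl (i, l))"
      using mult_left_mono[OF _ nonneg(1)[OF \<open>l \<in> D i\<close>]] by fastforce
  qed
  moreover have "(\<Sum>j\<in>S i. v (Inr (i, j)) * pair_coef x (Inr (i, j)) k') \<le> - (\<Sum>j\<in>S i. v (Inr (i, j)) * (1 - x j k))"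
    unfolding sum_negf[symmetric]
  proof (rule sum_mono)
    fix j assume "j \<in> S i"
    then have "pair_coef x (Inr (i, j)) k' \<le> - (1 - x j k)"
      using \<open>x i k' = 1\<close> bin'[of j] anti[of j] by auto
    then show "v (Inr (i, j)) * pair_coef x (Inr (i, j)) k' \<le> - (v (Inr (i, j)) * (1 - x j k))"
      using mult_left_mono[OF _ nonneg(2)[OF \<open>j \<in> S i\<close>]] by fastforce
  qed
  ultimately show ?thesis using \<open>x i k = 1\<close> unfolding screen_term_def by simp
qed

lemma max_scaled_add_le:
  fixes \<theta> u v u' v' w :: real
  assumes "0 \<le> \<theta>" "u' \<le> w" "v' \<le> w"
  shows "max (\<theta> * u + u') (\<theta> * v + v') \<le> \<theta> * max u v + w"
  using assms mult_left_mono[OF max.cobounded1[of u v] assms(1)] mult_left_mono[OF max.cobounded2[of v u] assms(1)]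
  by (simp add: max.commute)

lemma mult_le_abs_mult:
  fixes c d w :: real
  assumes "\<bar>c\<bar> \<le> w"
  shows "d * c \<le> \<bar>d\<bar> * w"
proof -
  have "d * c \<le> \<bar>d\<bar> * \<bar>c\<bar>" by (simp add: abs_mult[symmetric])
  also have "\<dots> \<le> \<bar>d\<bar> * w" using assms by (simp add: mult_left_mono)
  finally show ?thesis .
qed

lemma screen_term_add_le:
  assumes "0 \<le> \<theta>" and bin: "\<And>j. j \<in> insert i (D i \<union> S i) \<Longrightarrow> x j k = 0 \<or> x j k = 1"
  shows "screen_term D S x k (\<lambda>q. \<theta> * v q + d q) i \<le> \<theta> * screen_term D S x k v i
    + ((\<Sum>l\<in>D i. \<bar>d (Inl (i, l))\<bar> * pair_weight x k (Inl (i, l)))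
       + (\<Sum>j\<in>S i. \<bar>d (Inr (i, j))\<bar> * pair_weight x k (Inr (i, j))))"
    (is "_ \<le> _ + (?WD + ?WS)")
proof -
  have "0 \<le> x j k" if "j \<in> insert i (D i \<union> S i)" for j
    using bin[OF that] by auto
  then have "0 \<le> ?WD" "0 \<le> ?WS"
    by (auto intro!: sum_nonneg mult_nonneg_nonneg simp: le_max_iff_disj)
  have bin_i: "x i k = 0 \<or> x i k = 1" and bin_D: "\<And>l. l \<in> D i \<Longrightarrow> x l k = 0 \<or> x l k = 1"
    and bin_S: "\<And>j. j \<in> S i \<Longrightarrow> x j k = 0 \<or> x j k = 1"
    using bin by auto
  have "(\<Sum>l\<in>D i. d (Inl (i, l)) * x l k) \<le> ?WD"
    by (intro sum_mono mult_le_abs_mult) (use bin_i in \<open>auto dest!: bin_D\<close>)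
  moreover have "(\<Sum>l\<in>D i. d (Inl (i, l)) * x i k) \<le> ?WD"
    by (intro sum_mono mult_le_abs_mult) (use bin_i in \<open>auto dest!: bin_D\<close>)
  moreover have "(\<Sum>j\<in>S i. d (Inr (i, j)) * - (x i k * (1 - x j k))) \<le> ?WS"
    by (intro sum_mono mult_le_abs_mult) (use bin_i in \<open>auto dest!: bin_S\<close>)
  moreover have "x i k * ((\<Sum>l\<in>D i. d (Inl (i, l))) - (\<Sum>j\<in>S i. d (Inr (i, j)) * (1 - x j k)))
      = (\<Sum>l\<in>D i. d (Inl (i, l)) * x i k) + (\<Sum>j\<in>S i. d (Inr (i, j)) * - (x i k * (1 - x j k)))"
    by (simp add: right_diff_distrib sum_distrib_left sum_negf sum_subtractf algebra_simps)
  ultimately have "(\<Sum>l\<in>D i. d (Inl (i, l)) * x l k) \<le> ?WD + ?WS"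
    "x i k * ((\<Sum>l\<in>D i. d (Inl (i, l))) - (\<Sum>j\<in>S i. d (Inr (i, j)) * (1 - x j k))) \<le> ?WD + ?WS"
    using \<open>0 \<le> ?WD\<close> \<open>0 \<le> ?WS\<close> by linarith+
  moreover have "(\<Sum>l\<in>D i. (\<theta> * v (Inl (i, l)) + d (Inl (i, l))) * x l k)
      = \<theta> * (\<Sum>l\<in>D i. v (Inl (i, l)) * x l k) + (\<Sum>l\<in>D i. d (Inl (i, l)) * x l k)"
    by (simp add: sum.distrib sum_distrib_left algebra_simps)
  moreover have "x i k * ((\<Sum>l\<in>D i. \<theta> * v (Inl (i, l)) + d (Inl (i, l)))
        - (\<Sum>j\<in>S i. (\<theta> * v (Inr (i, j)) + d (Inr (i, j))) * (1 - x j k)))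
      = \<theta> * (x i k * ((\<Sum>l\<in>D i. v (Inl (i, l))) - (\<Sum>j\<in>S i. v (Inr (i, j)) * (1 - x j k))))
        + x i k * ((\<Sum>l\<in>D i. d (Inl (i, l))) - (\<Sum>j\<in>S i. d (Inr (i, j)) * (1 - x j k)))"
    by (simp add: sum.distrib sum_subtractf sum_distrib_left algebra_simps)
  ultimately show ?thesis
    unfolding screen_term_def by (simp only: max_scaled_add_le[OF \<open>0 \<le> \<theta>\<close>])
qed

lemma screening_threshold_le:
  fixes a b na \<epsilon> lam lam0 :: real
  assumes "0 < lam" "lam \<le> lam0" "a \<le> na * b"
    and "lam0 * (2 * \<epsilon> * b + na * b + a) / (2 * lam0 + na * b - a) \<le> lam"
  shows "(lam0 + lam) / (2 * lam0) * a + ((lam0 - lam) / (2 * lam0) * na + \<epsilon>) * b \<le> lam"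
proof -
  have "0 < lam0" "0 < 2 * lam0 + na * b - a" using assms(1-3) by linarith+
  then have hyp: "lam0 * (2 * \<epsilon> * b + na * b + a) \<le> lam * (2 * lam0 + na * b - a)"
    using assms(4) by (simp add: pos_divide_le_eq)
  have "2 * lam0 * ((lam0 + lam) / (2 * lam0) * a + ((lam0 - lam) / (2 * lam0) * na + \<epsilon>) * b)
      = (lam0 + lam) * a + (lam0 - lam) * na * b + 2 * lam0 * \<epsilon> * b"
    using \<open>0 < lam0\<close> by (simp add: field_simps)
  also have "\<dots> \<le> 2 * lam0 * lam"
    using hyp by (simp add: algebra_simps)
  finally show ?thesis
    using \<open>0 < lam0\<close> by simp
qed

locale binary_feature = pair_sets +
  fixes x :: "nat \<Rightarrow> nat \<Rightarrow> real" and k :: nat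
  assumes bin: "\<forall>i\<in>{1..n}. x i k = 0 \<or> x i k = 1"
begin

lemma bin_pair: "i \<in> {1..n} \<Longrightarrow> j \<in> insert i (D i \<union> S i) \<Longrightarrow> x j k = 0 \<or> x j k = 1"
  using D_sub S_sub bin by blast

lemma L2_set_pair_weight:
  "L2_set (pair_weight x k) (pairs n D S)
    = sqrt (\<Sum>i\<in>{1..n}. (\<Sum>l\<in>D i. max (x i k) (x l k)) + (\<Sum>j\<in>S i. max (x i k) (x j k)))"
proof -
  have "(max (x i k) (x j k))^2 = max (x i k) (x j k)" if "i \<in> {1..n}" "j \<in> insert i (D i \<union> S i)" for i j
    using bin_pair[OF that(1), of i] bin_pair[OF that] by (auto simp: max_def)
  then show ?thesis
    unfolding L2_set_def sum_pairs by (auto intro!: arg_cong[where f = sqrt] sum.cong)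
qed

lemma sum_abs_mult_pair_weight_le:
  "(\<Sum>q\<in>pairs n D S. \<bar>d q\<bar> * pair_weight x k q) \<le> L2_set d (pairs n D S) * L2_set (pair_weight x k) (pairs n D S)"
proof -
  have "0 \<le> pair_weight x k q" if "q \<in> pairs n D S" for q
    using that bin_pair unfolding pairs_def by (fastforce simp: le_max_iff_disj)
  then have "(\<Sum>q\<in>pairs n D S. \<bar>d q\<bar> * pair_weight x k q) = (\<Sum>q\<in>pairs n D S. \<bar>d q\<bar> * \<bar>pair_weight x k q\<bar>)"
    by (intro sum.cong) auto
  also have "\<dots> \<le> L2_set d (pairs n D S) * L2_set (pair_weight x k) (pairs n D S)"
    by (rule L2_set_mult_ineq)
  finally show ?thesis .
qed

lemma screen_bound_add_le:
  assumes "0 \<le> \<theta>"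
  shows "screen_bound n D S x k (\<lambda>q. \<theta> * v q + d q)
    \<le> \<theta> * screen_bound n D S x k v + L2_set d (pairs n D S) * L2_set (pair_weight x k) (pairs n D S)"
proof -
  have "screen_bound n D S x k (\<lambda>q. \<theta> * v q + d q)
      \<le> \<theta> * screen_bound n D S x k v + (\<Sum>q\<in>pairs n D S. \<bar>d q\<bar> * pair_weight x k q)"
    unfolding screen_bound_def sum_pairs sum_distrib_left sum.distrib[symmetric]
    using assms by (intro sum_mono screen_term_add_le) (use bin_pair in blast)+
  then show ?thesis using sum_abs_mult_pair_weight_le[of d] by linarith
qed

lemma screen_bound_le_L2_set:
  "screen_bound n D S x k v \<le> L2_set v (pairs n D S) * L2_set (pair_weight x k) (pairs n D S)"
  using screen_bound_add_le[of 0 v v] by simp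

lemma cmul_le_screen_bound:
  assumes bin': "\<forall>i\<in>{1..n}. x i k' = 0 \<or> x i k' = 1" and anti: "\<forall>i\<in>{1..n}. x i k' \<le> x i k"
    and nonneg: "\<forall>q\<in>pairs n D S. 0 \<le> v q"
  shows "cmul (pairs n D S) (pair_coef x) v k' \<le> screen_bound n D S x k v"
  unfolding cmul_def screen_bound_def sum_pairs
proof (rule sum_mono)
  fix i assume i: "i \<in> {1..n}"
  show "(\<Sum>l\<in>D i. v (Inl (i, l)) * pair_coef x (Inl (i, l)) k') + (\<Sum>j\<in>S i. v (Inr (i, j)) * pair_coef x (Inr (i, j)) k')
      \<le> screen_term D S x k v i"
    using D_sub S_sub bin bin' anti nonneg i unfolding pairs_def
    by (intro pair_sum_le_screen_term) blast+
qed

lemma primal_minimizer_zero_if_screened: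
  fixes p :: nat and t v0 v0s :: "pair \<Rightarrow> real"
  defines "Q \<equiv> pairs n D S" and "a \<equiv> screen_bound n D S x k v0"
    and "b \<equiv> L2_set (pair_weight x k) (pairs n D S)" and "na \<equiv> L2_set v0 (pairs n D S)"
  assumes min: "primal_minimizer Q {1..p} (pair_coef x) t lam eta m"
    and max: "dual_maximizer Q {1..p} (pair_coef x) t lam0 eta v0s"
    and lam: "0 < lam" "lam \<le> lam0" and "0 < eta"
    and near: "L2_set (\<lambda>q. v0 q - v0s q) Q \<le> \<epsilon>"
    and threshold: "lam0 * (2 * \<epsilon> * b + na * b + a) / (2 * lam0 + na * b - a) \<le> lam"
    and "k' \<in> {1..p}" and bin': "\<forall>i\<in>{1..n}. x i k' = 0 \<or> x i k' = 1"
    and anti: "\<forall>i\<in>{1..n}. x i k' \<le> x i k"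
  shows "m k' = 0"
proof -
  define a1 where "a1 = dual_of_primal {1..p} (pair_coef x) t m"
  define \<theta> \<rho> where "\<theta> = (lam0 + lam) / (2 * lam0)" and "\<rho> = (lam0 - lam) / (2 * lam0)"
  have "0 \<le> \<theta>" using lam by (simp add: \<theta>_def)
  have ball: "L2_set (\<lambda>q. a1 q - \<theta> * v0 q) Q \<le> \<rho> * na + \<epsilon>"
    unfolding a1_def \<theta>_def \<rho>_def na_def Q_def
    using dual_of_primal_near_scaled_dual[OF finite_pairs _ lam \<open>0 < eta\<close> max[unfolded Q_def]
        min[unfolded Q_def] near[unfolded Q_def]] by simp
  have "\<theta> * a + (\<rho> * na + \<epsilon>) * b \<le> lam"
    unfolding \<theta>_def \<rho>_def using lam screen_bound_le_L2_set threshold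
    by (intro screening_threshold_le) (simp_all add: a_def b_def na_def Q_def)
  have "cmul Q (pair_coef x) a1 k' \<le> screen_bound n D S x k a1"
    unfolding Q_def using bin' anti by (rule cmul_le_screen_bound) (simp add: a1_def dual_of_primal_nonneg)
  also have "\<dots> = screen_bound n D S x k (\<lambda>q. \<theta> * v0 q + (a1 q - \<theta> * v0 q))"
    by simp
  also have "\<dots> \<le> \<theta> * a + L2_set (\<lambda>q. a1 q - \<theta> * v0 q) Q * b"
    unfolding a_def b_def Q_def using \<open>0 \<le> \<theta>\<close> by (rule screen_bound_add_le)
  also have "\<dots> \<le> \<theta> * a + (\<rho> * na + \<epsilon>) * b"
    using ball by (simp add: b_def mult_right_mono)
  also note \<open>\<theta> * a + (\<rho> * na + \<epsilon>) * b \<le> lam\<close>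
  finally show ?thesis
    using primal_minimizer_eq_primal_of_dual[OF _ lam(1) \<open>0 < eta\<close> min \<open>k' \<in> {1..p}\<close>]
    by (simp add: a1_def primal_of_dual_def)
qed

end

theorem theorem8:
  fixes n K p :: nat
    and D S :: "nat \<Rightarrow> nat set"
    and x :: "nat \<Rightarrow> nat \<Rightarrow> real"
    and desc :: "nat \<Rightarrow> nat \<Rightarrow> bool"
    and L U \<eta> lam lam0 \<epsilon> :: real
    and a0D a0S a0sD a0sS :: "nat \<Rightarrow> nat \<Rightarrow> real"
    and mstar :: "nat \<Rightarrow> real"
    and k :: nat
  assumes "1 \<le> n" "1 \<le> K" "1 \<le> p"
    and "\<And>i. i \<in> {1..n} \<Longrightarrow> D i \<subseteq> {1..n} \<and> card (D i) = K"
    and "\<And>i. i \<in> {1..n} \<Longrightarrow> S i \<subseteq> {1..n} \<and> card (S i) = K"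
    and "L \<ge> U" "U \<ge> 0" "\<eta> > 0"
    \<comment> \<open>tree structure: desc k' k means k' is a descendant of k; features are antimonotone\<close>
    and "\<And>k k' i. k \<in> {1..p} \<Longrightarrow> k' \<in> {1..p} \<Longrightarrow> desc k' k \<Longrightarrow> i \<in> {1..n} \<Longrightarrow> x i k' \<le> x i k"
    \<comment> \<open>binary features\<close>
    and "\<And>i k. i \<in> {1..n} \<Longrightarrow> k \<in> {1..p} \<Longrightarrow> x i k = 0 \<or> x i k = 1"
    and "0 < lam" "lam \<le> lam0"
    \<comment> \<open>alpha0-star is the optimal solution of the dual at lambda0\<close>
    and "dual_nonneg n D S a0sD a0sS"
    and "\<And>bD bS. dual_nonneg n D S bD bS \<Longrightarrow>
           Dual n p D S x L U \<eta> lam0 bD bS \<le> Dual n p D S x L U \<eta> lam0 a0sD a0sS"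
    and "dual_nonneg n D S a0D a0S"
    and "\<epsilon> \<ge> 0"
    and "sqrt (sqnorm n D S (\<lambda>i l. a0D i l - a0sD i l) (\<lambda>i j. a0S i j - a0sS i j)) \<le> \<epsilon>"
    \<comment> \<open>m-star is the optimal solution of the primal at lambda\<close>
    and "\<forall>k\<in>{1..p}. 0 \<le> mstar k"
    and "\<And>m. \<forall>k\<in>{1..p}. 0 \<le> m k \<Longrightarrow>
           Primal n p D S x L U \<eta> lam mstar \<le> Primal n p D S x L U \<eta> lam m"
    and "k \<in> {1..p}"
    and "(let a = (\<Sum>i\<in>{1..n}. max (\<Sum>l\<in>D i. a0D i l * x l k)
                       (x i k * ((\<Sum>l\<in>D i. a0D i l) - (\<Sum>j\<in>S i. a0S i j * (1 - x j k)))));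
              b = sqrt (\<Sum>i\<in>{1..n}. (\<Sum>l\<in>D i. max (x i k) (x l k)) + (\<Sum>j\<in>S i. max (x i k) (x j k)));
              na = sqrt (sqnorm n D S a0D a0S)
          in lam0 * (2 * \<epsilon> * b + na * b + a) / (2 * lam0 + na * b - a)) \<le> lam"
  shows "\<forall>k'\<in>{1..p}. (k' = k \<or> desc k' k) \<longrightarrow> mstar k' = 0"
proof -
  \<comment> \<open>Not needed: the lower bounds on \<open>n, K, p\<close>, the cardinalities of \<open>D i\<close> and \<open>S i\<close>,
    \<open>L \<ge> U \<ge> 0\<close>, \<open>\<epsilon> \<ge> 0\<close> and the nonnegativity of \<open>\<alpha>\<^sub>0\<close>.\<close>
  interpret binary_feature n D S x k
    using assms(4,5,10,20) by unfold_locales blast+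
  have min: "primal_minimizer (pairs n D S) {1..p} (pair_coef x) (pair_target L U) lam \<eta> mstar"
    using assms(18,19) by (rule primal_minimizer_pairs)
  show ?thesis
  proof (intro ballI impI)
    fix k' assume k': "k' \<in> {1..p}" "k' = k \<or> desc k' k"
    from min show "mstar k' = 0"
    proof (rule primal_minimizer_zero_if_screened)
      show "dual_maximizer (pairs n D S) {1..p} (pair_coef x) (pair_target L U) lam0 \<eta> (pair_vec a0sD a0sS)"
        using assms(13,14) by (rule dual_maximizer_pairs)
      show "L2_set (\<lambda>q. pair_vec a0D a0S q - pair_vec a0sD a0sS q) (pairs n D S) \<le> \<epsilon>"
        using assms(17) by (simp only: sqrt_sqnorm_eq_L2_set pair_vec_diff)
      let ?a = "screen_bound n D S x k (pair_vec a0D a0S)"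
        and ?b = "L2_set (pair_weight x k) (pairs n D S)" and ?na = "L2_set (pair_vec a0D a0S) (pairs n D S)"
      show "lam0 * (2 * \<epsilon> * ?b + ?na * ?b + ?a) / (2 * lam0 + ?na * ?b - ?a) \<le> lam"
        using assms(21) by (simp only: Let_def screen_bound_pair_vec L2_set_pair_weight
            sqrt_sqnorm_eq_L2_set[symmetric])
      show "\<forall>i\<in>{1..n}. x i k' = 0 \<or> x i k' = 1" using assms(10) k'(1) by blast
      show "\<forall>i\<in>{1..n}. x i k' \<le> x i k" using assms(9)[OF assms(20) k'(1)] k'(2) by auto
    qed (fact assms(8,11,12) k'(1))+
  qed
qed

end
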